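(* If $\mathcal{C}$ is a prevariety over a finite alphabet $A$, then $\mathit{SF}(\mathcal{C})$ is a prevariety closed under concatenation.
   Context: Fix a finite alphabet $A$. A prevariety is a class of regular languages over $A$ containing $\emptyset$ and $A^*$, closed under union, intersection, complement, and under the quotients $u^{-1}L=\{w\mid uw\in L\}$ and $Lu^{-1}=\{w\mid wu\in L\}$ for $u\in A^*$. $\mathit{SF}(\mathcal{C})$ is the least class containing $\mathcal{C}$ and all singletons $\{a\}$ ($a\in A$), closed under union, complement and concatenation. *)

theory Defs
  imports Main
begin

text \<open>Words over the finite alphabet are lists over a finite type 'a; A* is UNIV.\<close>

definition conc :: "'a list set \<Rightarrow> 'a list set \<Rightarrow> 'a list set" where
  "conc K L = {u @ v | u v. u \<in> K \<and> v \<in> L}"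

definition lquot :: "'a list \<Rightarrow> 'a list set \<Rightarrow> 'a list set" where
  "lquot u L = {w. u @ w \<in> L}"

definition rquot :: "'a list set \<Rightarrow> 'a list \<Rightarrow> 'a list set" where
  "rquot L u = {w. w @ u \<in> L}"

definition star :: "'a list set \<Rightarrow> 'a list set" where
  "star L = (\<Union>n. ((conc L) ^^ n) {[]})"

inductive regular :: "'a list set \<Rightarrow> bool" where
  reg_empty: "regular {}"
| reg_eps: "regular {[]}"
| reg_letter: "regular {[a]}"
| reg_union: "regular K \<Longrightarrow> regular L \<Longrightarrow> regular (K \<union> L)"
| reg_conc: "regular K \<Longrightarrow> regular L \<Longrightarrow> regular (conc K L)"
| reg_star: "regular L \<Longrightarrow> regular (star L)"

definition prevariety :: "('a::finite) list set set \<Rightarrow> bool" where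
  "prevariety C \<longleftrightarrow>
     (\<forall>L\<in>C. regular L) \<and> {} \<in> C \<and> UNIV \<in> C \<and>
     (\<forall>K\<in>C. \<forall>L\<in>C. K \<union> L \<in> C) \<and>
     (\<forall>K\<in>C. \<forall>L\<in>C. K \<inter> L \<in> C) \<and>
     (\<forall>L\<in>C. - L \<in> C) \<and>
     (\<forall>L\<in>C. \<forall>u. lquot u L \<in> C \<and> rquot L u \<in> C)"

inductive_set SF :: "('a::finite) list set set \<Rightarrow> 'a list set set" for C where
  SF_base: "L \<in> C \<Longrightarrow> L \<in> SF C"
| SF_letter: "{[a]} \<in> SF C"
| SF_union: "K \<in> SF C \<Longrightarrow> L \<in> SF C \<Longrightarrow> K \<union> L \<in> SF C"
| SF_compl: "L \<in> SF C \<Longrightarrow> - L \<in> SF C"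
| SF_conc: "K \<in> SF C \<Longrightarrow> L \<in> SF C \<Longrightarrow> conc K L \<in> SF C"

definition closed_conc :: "'a list set set \<Rightarrow> bool" where
  "closed_conc D \<longleftrightarrow> (\<forall>K\<in>D. \<forall>L\<in>D. conc K L \<in> D)"

end

(* Regularity of SF(C) rests on the Myhill-Nerode characterisation: a language is regular iff
   it has finitely many left quotients.  This property is preserved by union, complement and
   concatenation, so it spreads from C to all of SF(C).  Conversely, the finitely many quotients q
   of a language satisfy the linear system  q = (U_a a (a^-1 q)) U (q n {[]}),  which is solved
   with regular coefficients by eliminating one unknown at a time with Arden's lemma.
   Closure of SF(C) under quotients reduces to quotients by a single letter, for which
   a^-1 (K L) = (a^-1 K) L U (a^-1 L if [] in K); the language {[]} belongs to SF(C) as the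
   complement of A A*. *)
theory Submission
  imports Defs
begin

lemma mem_conc: "w \<in> conc K L \<longleftrightarrow> (\<exists>u v. w = u @ v \<and> u \<in> K \<and> v \<in> L)"
  by (auto simp: conc_def)

lemma mem_lquot [simp]: "w \<in> lquot u L \<longleftrightarrow> u @ w \<in> L"
  by (simp add: lquot_def)

lemma mem_rquot [simp]: "w \<in> rquot L u \<longleftrightarrow> w @ u \<in> L"
  by (simp add: rquot_def)

lemma conc_assoc: "conc (conc K L) M = conc K (conc L M)"
  by (auto simp: mem_conc) (metis append.assoc)+

lemma conc_empty_left [simp]: "conc {} L = {}"
  by (simp add: conc_def)

lemma conc_Un_left: "conc (K \<union> L) M = conc K M \<union> conc L M"
  by (auto simp: conc_def)

lemma conc_Un_right: "conc K (L \<union> M) = conc K L \<union> conc K M"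
  by (auto simp: conc_def)

lemma conc_UN_right: "conc K (\<Union>i\<in>I. L i) = (\<Union>i\<in>I. conc K (L i))"
  by (auto simp: conc_def)

lemma Nil_notin_conc: "[] \<notin> K \<Longrightarrow> [] \<notin> conc K L"
  by (auto simp: mem_conc)

lemma Cons_in_conc:
  "a # w \<in> conc K L \<longleftrightarrow> ([] \<in> K \<and> a # w \<in> L) \<or> (\<exists>u v. w = u @ v \<and> a # u \<in> K \<and> v \<in> L)"
  by (auto simp: mem_conc Cons_eq_append_conv)

lemma snoc_in_conc:
  "w @ [a] \<in> conc K L \<longleftrightarrow> (w @ [a] \<in> K \<and> [] \<in> L) \<or> (\<exists>u v. w = u @ v \<and> u \<in> K \<and> v @ [a] \<in> L)"
proof
  assume "w @ [a] \<in> conc K L"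
  then obtain u v where "w @ [a] = u @ v" "u \<in> K" "v \<in> L" by (auto simp: mem_conc)
  then show "(w @ [a] \<in> K \<and> [] \<in> L) \<or> (\<exists>u v. w = u @ v \<and> u \<in> K \<and> v @ [a] \<in> L)"
    by (cases v rule: rev_exhaust) auto
next
  assume "(w @ [a] \<in> K \<and> [] \<in> L) \<or> (\<exists>u v. w = u @ v \<and> u \<in> K \<and> v @ [a] \<in> L)"
  then show "w @ [a] \<in> conc K L" by (auto simp: mem_conc) (metis append.assoc)
qed

lemma Cons_in_conc_letters: "a # v \<in> conc ((\<lambda>b. [b]) ` S) L \<longleftrightarrow> a \<in> S \<and> v \<in> L"
  by (auto simp: mem_conc) (metis append_Cons append_Nil imageI)

lemma lquot_Nil [simp]: "lquot [] L = L"
  by (simp add: lquot_def)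

lemma rquot_Nil [simp]: "rquot L [] = L"
  by (simp add: rquot_def)

lemma lquot_append: "lquot (u @ v) L = lquot v (lquot u L)"
  by (simp add: lquot_def)

lemma lquot_Un: "lquot u (K \<union> L) = lquot u K \<union> lquot u L"
  by auto

lemma lquot_Union: "lquot u (\<Union>T) = (\<Union>X\<in>T. lquot u X)"
  by auto

lemma lquot_Compl: "lquot u (- L) = - lquot u L"
  by auto

lemma rquot_Un: "rquot (K \<union> L) u = rquot K u \<union> rquot L u"
  by auto

lemma rquot_Compl: "rquot (- L) u = - rquot L u"
  by auto

lemma lquot_letter_conc:
  "lquot [a] (conc K L) = conc (lquot [a] K) L \<union> (if [] \<in> K then lquot [a] L else {})"
proof (rule set_eqI)
  fix w
  have "w \<in> lquot [a] (conc K L) \<longleftrightarrow> a # w \<in> conc K L" by simp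
  also have "\<dots> \<longleftrightarrow> w \<in> conc (lquot [a] K) L \<or> ([] \<in> K \<and> w \<in> lquot [a] L)"
    unfolding Cons_in_conc by (auto simp: mem_conc)
  finally show "w \<in> lquot [a] (conc K L) \<longleftrightarrow> w \<in> conc (lquot [a] K) L \<union> (if [] \<in> K then lquot [a] L else {})"
    by simp
qed

lemma rquot_letter_conc:
  "rquot (conc K L) [a] = conc K (rquot L [a]) \<union> (if [] \<in> L then rquot K [a] else {})"
proof (rule set_eqI)
  fix w
  have "w \<in> rquot (conc K L) [a] \<longleftrightarrow> w @ [a] \<in> conc K L" by simp
  also have "\<dots> \<longleftrightarrow> w \<in> conc K (rquot L [a]) \<or> ([] \<in> L \<and> w \<in> rquot K [a])"
    unfolding snoc_in_conc by (auto simp: mem_conc)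
  finally show "w \<in> rquot (conc K L) [a] \<longleftrightarrow> w \<in> conc K (rquot L [a]) \<union> (if [] \<in> L then rquot K [a] else {})"
    by simp
qed

lemma Nil_in_star: "[] \<in> star L"
proof -
  have "[] \<in> (conc L ^^ 0) {[]}" by simp
  then show ?thesis unfolding star_def by blast
qed

lemma append_in_star: "u \<in> L \<Longrightarrow> v \<in> star L \<Longrightarrow> u @ v \<in> star L"
proof -
  assume "u \<in> L" "v \<in> star L"
  then obtain n where "v \<in> (conc L ^^ n) {[]}" by (auto simp: star_def)
  with \<open>u \<in> L\<close> have "u @ v \<in> (conc L ^^ Suc n) {[]}" by (auto simp: mem_conc)
  then show ?thesis unfolding star_def by blast
qed

lemma star_induct [consumes 1, case_names Nil append]:
  assumes "w \<in> star L"
    and "P []"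
    and "\<And>u v. u \<in> L \<Longrightarrow> v \<in> star L \<Longrightarrow> P v \<Longrightarrow> P (u @ v)"
  shows "P w"
proof -
  have "P w" if "w \<in> (conc L ^^ n) {[]}" for n w
    using that
  proof (induction n arbitrary: w)
    case 0
    then show ?case using assms(2) by simp
  next
    case (Suc n)
    then obtain u v where "w = u @ v" "u \<in> L" "v \<in> (conc L ^^ n) {[]}"
      by (auto simp: mem_conc)
    moreover from this(3) have "v \<in> star L" by (auto simp: star_def)
    ultimately show ?case using Suc.IH assms(3) by blast
  qed
  with assms(1) show ?thesis by (auto simp: star_def)
qed

lemma lquot_letter_star: "lquot [a] (star L) = conc (lquot [a] L) (star L)"
proof
  have "v = a # w \<longrightarrow> w \<in> conc (lquot [a] L) (star L)" if "v \<in> star L" for v w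
    using that
  proof (induction arbitrary: w rule: star_induct)
    case Nil
    show ?case by simp
  next
    case (append x y)
    then show ?case by (cases x) (auto simp: mem_conc)
  qed
  then show "lquot [a] (star L) \<subseteq> conc (lquot [a] L) (star L)" by auto
next
  show "conc (lquot [a] L) (star L) \<subseteq> lquot [a] (star L)"
    by (auto simp: mem_conc intro: append_in_star[of "a # _", simplified])
qed

lemma arden:
  assumes "[] \<notin> A" and X: "X = conc A X \<union> B"
  shows "X = conc (star A) B"
proof
  show "conc (star A) B \<subseteq> X"
  proof
    fix w assume "w \<in> conc (star A) B"
    then obtain u v where w: "w = u @ v" "u \<in> star A" "v \<in> B" by (auto simp: mem_conc)
    from \<open>u \<in> star A\<close> have "u @ v \<in> X"
    proof (induction rule: star_induct)
      case Nil
      show ?case using \<open>v \<in> B\<close> X by auto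
    next
      case (append u' u)
      then have "u' @ (u @ v) \<in> conc A X" by (auto simp: mem_conc)
      then show ?case using X by auto
    qed
    then show "w \<in> X" using w by simp
  qed
next
  show "X \<subseteq> conc (star A) B"
  proof
    fix w assume "w \<in> X"
    then show "w \<in> conc (star A) B"
    proof (induction w rule: length_induct)
      case (1 w)
      show ?case
      proof (cases "w \<in> B")
        case True
        then show ?thesis using Nil_in_star by (force simp: mem_conc)
      next
        case False
        with "1.prems" X have "w \<in> conc A X" by blast
        then obtain u v where "w = u @ v" "u \<in> A" "v \<in> X"
          by (auto simp: mem_conc)
        moreover from this(2) have "length v < length w" using assms(1) \<open>w = u @ v\<close>
          by (cases u) auto
        ultimately have "v \<in> conc (star A) B" using "1.IH" by blast
        then obtain s b where "v = s @ b" "s \<in> star A" "b \<in> B"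
          by (auto simp: mem_conc)
        moreover have "u @ s \<in> star A" using \<open>u \<in> A\<close> \<open>s \<in> star A\<close> by (rule append_in_star)
        ultimately show ?thesis using \<open>w = u @ v\<close> unfolding mem_conc
          by (metis append.assoc)
      qed
    qed
  qed
qed

lemma regular_singleton: "regular {w}"
proof (induction w)
  case Nil
  show ?case by (rule reg_eps)
next
  case (Cons a w)
  have "{a # w} = conc {[a]} {w}" by (auto simp: conc_def)
  with Cons show ?case by (metis reg_conc reg_letter)
qed

lemma regular_UN:
  "finite I \<Longrightarrow> (\<And>i. i \<in> I \<Longrightarrow> regular (L i)) \<Longrightarrow> regular (\<Union>i\<in>I. L i)"
  by (induction rule: finite_induct) (auto intro: reg_empty reg_union)

lemma regular_finite: "finite L \<Longrightarrow> regular L"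
  using regular_UN[of L "\<lambda>w. {w}"] by (simp add: regular_singleton)

lemma regular_linear_system_solution:
  assumes "finite I"
    and eq: "\<And>i. i \<in> I \<Longrightarrow> X i = (\<Union>j\<in>I. conc (A i j) (X j)) \<union> B i"
    and "\<And>i j. i \<in> I \<Longrightarrow> j \<in> I \<Longrightarrow> regular (A i j)"
    and "\<And>i j. i \<in> I \<Longrightarrow> j \<in> I \<Longrightarrow> [] \<notin> A i j"
    and "\<And>i. i \<in> I \<Longrightarrow> regular (B i)"
    and "i \<in> I"
  shows "regular (X i)"
  using assms
proof (induction I arbitrary: A B i rule: finite_induct)
  case empty
  then show ?case by simp
next
  case (insert k I)
  define S where "S = star (A k k)"
  define A' where "A' i j = A i j \<union> conc (A i k) (conc S (A k j))" for i j
  define B' where "B' i = B i \<union> conc (A i k) (conc S (B k))" for i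
  have "X k = conc (A k k) (X k) \<union> ((\<Union>j\<in>I. conc (A k j) (X j)) \<union> B k)"
    using insert.prems(1)[of k] by (simp add: Un_ac)
  then have "X k = conc S ((\<Union>j\<in>I. conc (A k j) (X j)) \<union> B k)"
    unfolding S_def using insert.prems(3) by (intro arden) auto
  then have Xk: "X k = (\<Union>j\<in>I. conc (conc S (A k j)) (X j)) \<union> conc S (B k)"
    by (simp add: conc_Un_right conc_UN_right conc_assoc)
  have "X i = (\<Union>j\<in>I. conc (A' i j) (X j)) \<union> B' i" if "i \<in> I" for i
  proof -
    have "X i = conc (A i k) (X k) \<union> (\<Union>j\<in>I. conc (A i j) (X j)) \<union> B i"
      using insert.prems(1)[of i] that by (simp add: Un_ac)
    also have "\<dots> = (\<Union>j\<in>I. conc (A' i j) (X j)) \<union> B' i"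
      unfolding Xk A'_def B'_def
      by (simp add: conc_Un_right conc_UN_right conc_Un_left conc_assoc UN_Un_distrib Un_ac)
    finally show ?thesis .
  qed
  then have "regular (X j)" if "j \<in> I" for j
    using that insert.prems(2-4)
    by (intro insert.IH[of A' B']) (auto simp: A'_def B'_def S_def Nil_notin_conc
        intro!: reg_union reg_conc reg_star)
  moreover have "regular (X k)"
    unfolding Xk S_def using insert.prems(2,4) \<open>finite I\<close> calculation
    by (auto intro!: reg_union reg_conc reg_star regular_UN)
  ultimately show ?case using insert.prems(5) by blast
qed

definition lquots :: "'a list set \<Rightarrow> 'a list set set" where
  "lquots L = range (\<lambda>u. lquot u L)"

lemma lquot_in_lquots: "lquot u L \<in> lquots L"
  by (simp add: lquots_def)

lemma self_in_lquots: "L \<in> lquots L"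
  using lquot_in_lquots[of "[]" L] by simp

lemma lquots_closed: "X \<in> lquots L \<Longrightarrow> lquot v X \<in> lquots L"
  by (auto simp: lquots_def lquot_append[symmetric] simp del: mem_lquot)

lemma regular_if_finite_lquots:
  fixes L :: "('a::finite) list set"
  assumes "finite (lquots L)"
  shows "regular L"
proof -
  define A where "A q p = (\<lambda>a. [a]) ` {a. lquot [a] q = p}" for q p :: "'a list set"
  define B where "B q = (if [] \<in> q then {[]} else {} :: 'a list set)" for q :: "'a list set"
  have eq: "q = (\<Union>p\<in>lquots L. conc (A q p) p) \<union> B q" if "q \<in> lquots L" for q
  proof (rule set_eqI)
    fix w
    show "w \<in> q \<longleftrightarrow> w \<in> (\<Union>p\<in>lquots L. conc (A q p) p) \<union> B q"
    proof (cases w)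
      case Nil
      then show ?thesis by (auto simp: A_def B_def mem_conc)
    next
      case (Cons a v)
      have "a # v \<in> conc (A q p) p \<longleftrightarrow> p = lquot [a] q \<and> v \<in> p" for p
        by (auto simp: A_def Cons_in_conc_letters simp del: mem_lquot)
      moreover have "lquot [a] q \<in> lquots L" using that by (rule lquots_closed)
      ultimately show ?thesis using Cons by (auto simp: B_def)
    qed
  qed
  have coeffs: "regular (A q p)" "[] \<notin> A q p" "regular (B q)" for q p
    by (auto simp: A_def B_def intro: regular_finite)
  from assms eq coeffs self_in_lquots show ?thesis
    by (rule regular_linear_system_solution[where X = "\<lambda>q. q"])
qed

lemma finite_lquotsI:
  assumes "finite F" "L \<in> F" "\<And>X a. X \<in> F \<Longrightarrow> lquot [a] X \<in> F"
  shows "finite (lquots L)"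
proof -
  have "lquot u X \<in> F" if "X \<in> F" for u X
    using that
  proof (induction u arbitrary: X)
    case Nil
    then show ?case by simp
  next
    case (Cons a u)
    then show ?case
      using assms(3) lquot_append[of "[a]" u X] by simp
  qed
  then have "lquots L \<subseteq> F" using assms(2) by (auto simp: lquots_def simp del: mem_lquot)
  then show ?thesis using assms(1) by (rule finite_subset)
qed

lemma finite_lquots_if_finite: "finite L \<Longrightarrow> finite (lquots L)"
proof -
  assume "finite L"
  let ?D = "\<Union>w\<in>L. (\<lambda>i. drop i w) ` {..length w}"
  have "lquot u L \<subseteq> ?D" for u
  proof
    fix w assume "w \<in> lquot u L"
    moreover have "w = drop (length u) (u @ w)" by simp
    ultimately show "w \<in> ?D" by fastforce
  qed
  then have "lquots L \<subseteq> Pow ?D" by (auto simp: lquots_def simp del: mem_lquot)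
  moreover have "finite ?D" using \<open>finite L\<close> by simp
  ultimately show ?thesis by (meson finite_Pow_iff finite_subset)
qed

lemma finite_lquots_Un:
  assumes "finite (lquots K)" "finite (lquots L)"
  shows "finite (lquots (K \<union> L))"
proof -
  have "lquots (K \<union> L) \<subseteq> (\<lambda>(X, Y). X \<union> Y) ` (lquots K \<times> lquots L)"
    by (auto simp: lquots_def lquot_Un simp del: mem_lquot)
  then show ?thesis using assms by (meson finite_SigmaI finite_imageI finite_subset)
qed

lemma finite_lquots_Compl: "finite (lquots L) \<Longrightarrow> finite (lquots (- L))"
proof -
  have "lquots (- L) = uminus ` lquots L"
    by (simp add: lquots_def image_image lquot_Compl del: mem_lquot)
  then show "finite (lquots L) \<Longrightarrow> finite (lquots (- L))" by simp
qed

lemma finite_lquots_conc: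
  assumes "finite (lquots K)" "finite (lquots L)"
  shows "finite (lquots (conc K L))"
proof -
  define F where "F = (\<lambda>(X, T). conc X L \<union> \<Union>T) ` (lquots K \<times> Pow (lquots L))"
  show ?thesis
  proof (rule finite_lquotsI)
    show "finite F" using assms by (simp add: F_def)
    have "conc K L \<union> \<Union>{} \<in> F"
      unfolding F_def by (intro image_eqI[where x = "(K, {})"]) (auto intro: self_in_lquots)
    then show "conc K L \<in> F" by simp
  next
    fix Z a assume "Z \<in> F"
    then obtain X T where Z: "Z = conc X L \<union> \<Union>T" "X \<in> lquots K" "T \<subseteq> lquots L"
      by (auto simp: F_def)
    define T' where "T' = lquot [a] ` T \<union> (if [] \<in> X then {lquot [a] L} else {})"
    have "lquot [a] Z = conc (lquot [a] X) L \<union> \<Union>T'"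
      by (auto simp: Z(1) T'_def lquot_letter_conc lquot_Un lquot_Union simp del: mem_lquot)
    moreover have "lquot [a] X \<in> lquots K" "T' \<subseteq> lquots L"
      using Z(2,3) by (auto simp: T'_def lquots_closed lquot_in_lquots simp del: mem_lquot)
    ultimately show "lquot [a] Z \<in> F"
      unfolding F_def by (intro image_eqI[where x = "(lquot [a] X, T')"]) auto
  qed
qed

lemma finite_lquots_star:
  assumes "finite (lquots L)"
  shows "finite (lquots (star L))"
proof -
  define F where "F = insert (star L) ((\<lambda>T. conc (\<Union>T) (star L)) ` Pow (lquots L))"
  show ?thesis
  proof (rule finite_lquotsI)
    show "finite F" using assms by (simp add: F_def)
    show "star L \<in> F" by (simp add: F_def)
  next
    fix Z a assume "Z \<in> F"
    then consider "Z = star L" | T where "Z = conc (\<Union>T) (star L)" "T \<subseteq> lquots L"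
      by (auto simp: F_def)
    then obtain T' where "lquot [a] Z = conc (\<Union>T') (star L)" "T' \<subseteq> lquots L"
    proof cases
      case 1
      then show ?thesis
        by (intro that[of "{lquot [a] L}"]) (auto simp: lquot_letter_star lquot_in_lquots simp del: mem_lquot)
    next
      case (2 T)
      let ?T' = "lquot [a] ` T \<union> (if [] \<in> \<Union>T then {lquot [a] L} else {})"
      have "lquot [a] Z = conc (\<Union>?T') (star L)"
        by (auto simp: 2(1) lquot_letter_conc lquot_letter_star lquot_Union conc_Un_left
            simp del: mem_lquot)
      moreover have "?T' \<subseteq> lquots L"
        using 2(2) by (auto simp: lquots_closed lquot_in_lquots simp del: mem_lquot)
      ultimately show ?thesis by (rule that)
    qed
    then show "lquot [a] Z \<in> F" by (auto simp: F_def)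
  qed
qed

lemma finite_lquots_if_regular: "regular L \<Longrightarrow> finite (lquots L)"
  by (induction rule: regular.induct)
    (auto intro: finite_lquots_if_finite finite_lquots_Un finite_lquots_conc finite_lquots_star)

lemma SF_UNIV: "UNIV \<in> SF C"
proof -
  have "{[undefined]} \<union> - {[undefined]} \<in> SF C" by (intro SF_union SF_compl SF_letter)
  then show ?thesis by simp
qed

lemma SF_empty: "{} \<in> SF C"
  using SF_compl[OF SF_UNIV] by simp

lemma SF_Int: "K \<in> SF C \<Longrightarrow> L \<in> SF C \<Longrightarrow> K \<inter> L \<in> SF C"
proof -
  assume "K \<in> SF C" "L \<in> SF C"
  then have "- (- K \<union> - L) \<in> SF C" by (intro SF_union SF_compl)
  then show ?thesis by simp
qed

lemma SF_UN: "finite I \<Longrightarrow> (\<And>i. i \<in> I \<Longrightarrow> L i \<in> SF C) \<Longrightarrow> (\<Union>i\<in>I. L i) \<in> SF C"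
  by (induction rule: finite_induct) (auto intro: SF_empty SF_union)

lemma SF_Nil: "{[]} \<in> SF C"
proof -
  have "(\<Union>a. {[a]}) \<in> SF C" by (intro SF_UN SF_letter) simp
  then have "- conc (\<Union>a. {[a]}) UNIV \<in> SF C" by (intro SF_compl SF_conc SF_UNIV)
  moreover have "- conc (\<Union>a. {[a]}) UNIV = {[]}"
    by (auto simp: mem_conc) (metis append_Cons append_Nil neq_Nil_conv)
  ultimately show ?thesis by metis
qed

lemma SF_finite_lquots:
  assumes "\<And>L. L \<in> C \<Longrightarrow> regular L" and "L \<in> SF C"
  shows "finite (lquots L)"
  using assms(2)
  by induction
    (auto intro: finite_lquots_if_regular assms(1) finite_lquots_if_finite finite_lquots_Un
      finite_lquots_Compl finite_lquots_conc)

context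
  fixes C :: "('a::finite) list set set"
  assumes lquot_closed: "\<And>L u. L \<in> C \<Longrightarrow> lquot u L \<in> C"
    and rquot_closed: "\<And>L u. L \<in> C \<Longrightarrow> rquot L u \<in> C"
begin

lemma SF_letter_quotients:
  assumes "L \<in> SF C"
  shows "lquot [a] L \<in> SF C \<and> rquot L [a] \<in> SF C"
  using assms
proof induction
  case (SF_base L)
  then show ?case using lquot_closed rquot_closed by (blast intro: SF.SF_base)
next
  case (SF_letter b)
  have "lquot [a] {[b]} = (if a = b then {[]} else {})" "rquot {[b]} [a] = (if a = b then {[]} else {})"
    by auto
  then show ?case by (simp add: SF_Nil SF_empty)
next
  case (SF_union K L)
  then show ?case by (simp add: lquot_Un rquot_Un SF.SF_union del: mem_lquot mem_rquot)
next
  case (SF_compl L)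
  then show ?case by (simp add: lquot_Compl rquot_Compl SF.SF_compl del: mem_lquot mem_rquot)
next
  case (SF_conc K L)
  then show ?case
    by (simp add: lquot_letter_conc rquot_letter_conc SF.SF_union SF.SF_conc SF_empty
        del: mem_lquot mem_rquot)
qed

lemma SF_lquot:
  assumes "L \<in> SF C"
  shows "lquot u L \<in> SF C"
  using assms
proof (induction u arbitrary: L)
  case Nil
  then show ?case by simp
next
  case (Cons a u)
  then show ?case
    using SF_letter_quotients lquot_append[of "[a]" u L] by simp
qed

lemma SF_rquot:
  assumes "L \<in> SF C"
  shows "rquot L u \<in> SF C"
proof (induction u)
  case Nil
  show ?case using assms by simp
next
  case (Cons a u)
  have "rquot L (a # u) = rquot (rquot L u) [a]" by auto
  then show ?case using SF_letter_quotients[OF Cons] by simp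
qed

end

theorem proposition3p2:
  fixes C :: "('a::finite) list set set"
  assumes "prevariety C"
  shows "prevariety (SF C) \<and> closed_conc (SF C)"
proof -
  have regular: "\<And>L. L \<in> C \<Longrightarrow> regular L"
    and lquot: "\<And>L u. L \<in> C \<Longrightarrow> lquot u L \<in> C"
    and rquot: "\<And>L u. L \<in> C \<Longrightarrow> rquot L u \<in> C"
    using assms by (auto simp: prevariety_def)
  have "\<forall>L\<in>SF C. regular L"
    using regular_if_finite_lquots SF_finite_lquots[OF regular] by blast
  moreover have "\<forall>L\<in>SF C. \<forall>u. lquot u L \<in> SF C \<and> rquot L u \<in> SF C"
    using SF_lquot[OF lquot rquot] SF_rquot[OF lquot rquot] by blast
  ultimately show ?thesis
    unfolding prevariety_def closed_conc_def
    by (auto intro: SF_empty SF_UNIV SF_union SF_Int SF_compl SF_conc)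
qed

end
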